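(* Let $(M_1,f_1,g_1)$ be an $(m,n)$-hypermodule over a commutative Krasner $(m,n)$-hyperring $(R_1,f'_1,g'_1)$ and $(M_2,f_2,g_2)$ an $(m,n)$-hypermodule over a commutative Krasner $(m,n)$-hyperring $(R_2,f'_2,g'_2)$, both with scalar identity $1$, and consider the $(m,n)$-hypermodule $(M_1\times M_2,f_1\times f_2,g_1\times g_2)$ over $(R_1\times R_2,f'_1\times f'_2,g'_1\times g'_2)$. Let $\phi_1:\mathcal{SH}(M_1)\to\mathcal{SH}(M_1)\cup\{\varnothing\}$ and $\phi_2:\mathcal{SH}(M_2)\to\mathcal{SH}(M_2)\cup\{\varnothing\}$ be functions with $\phi_2(M_2)=M_2$. Then $Q_1\times M_2$ is an $n$-ary $\phi_1\times\phi_2$-classical prime subhypermodule of $M_1\times M_2$ if and only if $Q_1$ is an $n$-ary $\phi_1$-classical prime subhypermodule of $M_1$.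
   Context: A commutative Krasner $(m,n)$-hyperring with scalar identity $1$ is a triple $(R,f',g')$ where $(R,f')$ is a canonical $m$-ary hypergroup with zero $0$, $(R,g')$ is a commutative $n$-ary semigroup, $g'$ is distributive over $f'$, $0$ is a zero element for $g'$, and $g'(x,1^{(n-1)})=x$. Notation: $x_i^j$ denotes $x_i,\dots,x_j$ and $x^{(k)}$ denotes $x$ repeated $k$ times. An $(m,n)$-hypermodule over $R$ is a triple $(M,f,g)$ with $(M,f)$ a canonical $m$-ary hypergroup with zero $0$ and $g:R^{n-1}\times M\to P^*(M)$ satisfying: $g(r_1^{n-1},f(x_1^m))=f(g(r_1^{n-1},x_1),\dots,g(r_1^{n-1},x_m))$; $g(r_1^{i-1},f'(s_1^m),r_{i+1}^{n-1},x)=f(g(r_1^{i-1},s_1,r_{i+1}^{n-1},x),\dots,g(r_1^{i-1},s_m,r_{i+1}^{n-1},x))$; $g(r_1^{i-1},g'(r_i^{i+n-1}),r_{i+n}^{2n-2},x)=g(r_1^{n-1},g(r_n^{2n-2},x))$; $g(r_1^{i-1},0,r_{i+1}^{n-1},x)=\{0\}$; moreover $g(1^{(n-1)},a)=\{a\}$. A subhypermodule is a nonempty $N\subseteq M$ with $(N,f)$ an $m$-ary subhypergroup and $g(R^{(n-1)},N)\subseteq N$; $\mathcal{SH}(M)$ is the set of subhypermodules. The product hyperring has componentwise operations, with identity $(1,1)$. On $M_1\times M_2$: $f_1\times f_2((a_1,b_1),\dots,(a_m,b_m))=\{(x_1,x_2):x_1\in f_1(a_1^m),x_2\in f_2(b_1^m)\}$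 and $g_1\times g_2((r_1,s_1),\dots,(r_{n-1},s_{n-1}),(a,b))=\{(y_1,y_2):y_1\in g_1(r_1^{n-1},a),y_2\in g_2(s_1^{n-1},b)\}$. The function $\phi_1\times\phi_2$ is defined on product subhypermodules by $(\phi_1\times\phi_2)(K_1\times K_2)=\phi_1(K_1)\times\phi_2(K_2)$. Given a function $\phi$ on subhypermodules of an $(m,n)$-hypermodule with external operation $g$, a proper subhypermodule $Q$ is $n$-ary $\phi$-classical prime if $g(r_1^{n-1},a)\subseteq Q\setminus\phi(Q)$ implies $g(r_i,1^{(n-2)},a)\subseteq Q$ for some $1\le i\le n-1$ (for $M_1\times M_2$, $1$ is $(1,1)$). *)

theory Defs
  imports Main "HOL-Library.Multiset"
begin

(* Lists of length k encode k-tuples x_1^k. Hyperoperations return sets. *)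

definition sing :: "'a \<Rightarrow> 'a set" where "sing x = {x}"

definition liftS :: "('a list \<Rightarrow> 'b set) \<Rightarrow> 'a set list \<Rightarrow> 'b set" where
  "liftS F As = \<Union> {F xs | xs. list_all2 (\<in>) xs As}"

definition ins :: "nat \<Rightarrow> 'a \<Rightarrow> 'a list \<Rightarrow> 'a list" where
  "ins i y as = take i as @ [y] @ drop i as"

definition mary_hypergroup :: "'a set \<Rightarrow> ('a list \<Rightarrow> 'a set) \<Rightarrow> nat \<Rightarrow> bool" where
  "mary_hypergroup H f m \<longleftrightarrow> m \<ge> 2 \<and>
    (\<forall>xs \<in> lists H. length xs = m \<longrightarrow> f xs \<noteq> {} \<and> f xs \<subseteq> H) \<and>
    (\<forall>xs \<in> lists H. length xs = 2*m - 1 \<longrightarrow> (\<forall>i<m. \<forall>j<m.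
        liftS f (map sing (take i xs) @ [f (take m (drop i xs))] @ map sing (drop (i+m) xs)) =
        liftS f (map sing (take j xs) @ [f (take m (drop j xs))] @ map sing (drop (j+m) xs)))) \<and>
    (\<forall>xs \<in> lists H. length xs = m \<longrightarrow> (\<forall>i<m.
        liftS f (map sing (take i xs) @ [H] @ map sing (drop (Suc i) xs)) = H))"

definition neg :: "'a set \<Rightarrow> ('a list \<Rightarrow> 'a set) \<Rightarrow> 'a \<Rightarrow> nat \<Rightarrow> 'a \<Rightarrow> 'a" where
  "neg H f z m x = (THE y. y \<in> H \<and> z \<in> f (x # y # replicate (m-2) z))"

definition canonical_hypergroup :: "'a set \<Rightarrow> ('a list \<Rightarrow> 'a set) \<Rightarrow> 'a \<Rightarrow> nat \<Rightarrow> bool" where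
  "canonical_hypergroup H f z m \<longleftrightarrow> mary_hypergroup H f m \<and>
    (\<forall>xs \<in> lists H. \<forall>ys. length xs = m \<longrightarrow> mset xs = mset ys \<longrightarrow> f xs = f ys) \<and>
    z \<in> H \<and> (\<forall>x\<in>H. f (x # replicate (m-1) z) = {x}) \<and>
    (\<forall>x\<in>H. \<exists>!y. y \<in> H \<and> z \<in> f (x # y # replicate (m-2) z)) \<and>
    (\<forall>x\<in>H. \<forall>xs \<in> lists H. length xs = m \<longrightarrow> x \<in> f xs \<longrightarrow>
        (\<forall>i<m. xs ! i \<in> f ((map (neg H f z m) xs)[i := x])))"

definition comm_nary_semigroup :: "'r set \<Rightarrow> ('r list \<Rightarrow> 'r) \<Rightarrow> nat \<Rightarrow> bool" where
  "comm_nary_semigroup R g n \<longleftrightarrow> n \<ge> 2 \<and>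
    (\<forall>xs \<in> lists R. length xs = n \<longrightarrow> g xs \<in> R) \<and>
    (\<forall>xs \<in> lists R. length xs = 2*n - 1 \<longrightarrow> (\<forall>i<n. \<forall>j<n.
        g (take i xs @ [g (take n (drop i xs))] @ drop (i+n) xs) =
        g (take j xs @ [g (take n (drop j xs))] @ drop (j+n) xs))) \<and>
    (\<forall>xs \<in> lists R. \<forall>ys. length xs = n \<longrightarrow> mset xs = mset ys \<longrightarrow> g xs = g ys)"

definition krasner_hyperring ::
  "'r set \<Rightarrow> ('r list \<Rightarrow> 'r set) \<Rightarrow> ('r list \<Rightarrow> 'r) \<Rightarrow> 'r \<Rightarrow> 'r \<Rightarrow> nat \<Rightarrow> nat \<Rightarrow> bool" where
  "krasner_hyperring R f' g' z one m n \<longleftrightarrow>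
    canonical_hypergroup R f' z m \<and> comm_nary_semigroup R g' n \<and>
    (\<forall>as \<in> lists R. \<forall>xs \<in> lists R. length as = n - 1 \<longrightarrow> length xs = m \<longrightarrow> (\<forall>i<n.
        (\<lambda>y. g' (ins i y as)) ` f' xs = f' (map (\<lambda>x. g' (ins i x as)) xs))) \<and>
    (\<forall>as \<in> lists R. length as = n - 1 \<longrightarrow> (\<forall>i<n. g' (ins i z as) = z)) \<and>
    one \<in> R \<and> (\<forall>x\<in>R. g' (x # replicate (n-1) one) = x)"

definition hypermodule ::
  "'r set \<Rightarrow> ('r list \<Rightarrow> 'r set) \<Rightarrow> ('r list \<Rightarrow> 'r) \<Rightarrow> 'r \<Rightarrow> 'r \<Rightarrow> nat \<Rightarrow> nat \<Rightarrow>
   'a set \<Rightarrow> ('a list \<Rightarrow> 'a set) \<Rightarrow> ('r list \<Rightarrow> 'a \<Rightarrow> 'a set) \<Rightarrow> 'a \<Rightarrow> bool" where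
  "hypermodule R f' g' z one m n M f g zM \<longleftrightarrow>
    canonical_hypergroup M f zM m \<and>
    (\<forall>rs \<in> lists R. \<forall>x\<in>M. length rs = n - 1 \<longrightarrow> g rs x \<noteq> {} \<and> g rs x \<subseteq> M) \<and>
    (\<forall>rs \<in> lists R. \<forall>xs \<in> lists M. length rs = n - 1 \<longrightarrow> length xs = m \<longrightarrow>
        \<Union> (g rs ` f xs) = liftS f (map (g rs) xs)) \<and>
    (\<forall>rs \<in> lists R. \<forall>ss \<in> lists R. \<forall>x\<in>M. length rs = n - 2 \<longrightarrow> length ss = m \<longrightarrow>
        (\<forall>i<n-1. \<Union> ((\<lambda>s. g (ins i s rs) x) ` f' ss) = liftS f (map (\<lambda>s. g (ins i s rs) x) ss))) \<and>
    (\<forall>rs \<in> lists R. \<forall>x\<in>M. length rs = 2*n - 2 \<longrightarrow> (\<forall>i<n-1.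
        g (take i rs @ [g' (take n (drop i rs))] @ drop (i+n) rs) x =
        \<Union> (g (take (n-1) rs) ` g (drop (n-1) rs) x))) \<and>
    (\<forall>rs \<in> lists R. \<forall>x\<in>M. length rs = n - 2 \<longrightarrow> (\<forall>i<n-1. g (ins i z rs) x = {zM})) \<and>
    (\<forall>a\<in>M. g (replicate (n-1) one) a = {a})"

definition subhypermodules ::
  "'r set \<Rightarrow> nat \<Rightarrow> nat \<Rightarrow> 'a set \<Rightarrow> ('a list \<Rightarrow> 'a set) \<Rightarrow> ('r list \<Rightarrow> 'a \<Rightarrow> 'a set) \<Rightarrow> 'a set set" where
  "subhypermodules R m n M f g = {N. N \<noteq> {} \<and> N \<subseteq> M \<and> mary_hypergroup N f m \<and>
     (\<forall>rs \<in> lists R. \<forall>x\<in>N. length rs = n - 1 \<longrightarrow> g rs x \<subseteq> N)}"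

definition classical_prime ::
  "'r set \<Rightarrow> 'r \<Rightarrow> nat \<Rightarrow> nat \<Rightarrow> 'a set \<Rightarrow> ('a list \<Rightarrow> 'a set) \<Rightarrow> ('r list \<Rightarrow> 'a \<Rightarrow> 'a set)
   \<Rightarrow> ('a set \<Rightarrow> 'a set) \<Rightarrow> 'a set \<Rightarrow> bool" where
  "classical_prime R one m n M f g phi Q \<longleftrightarrow>
    Q \<in> subhypermodules R m n M f g \<and> Q \<noteq> M \<and>
    (\<forall>rs \<in> lists R. \<forall>a\<in>M. length rs = n - 1 \<longrightarrow> g rs a \<subseteq> Q - phi Q \<longrightarrow>
        (\<exists>i<n-1. g (rs ! i # replicate (n-2) one) a \<subseteq> Q))"

definition prod_hop :: "('a list \<Rightarrow> 'a set) \<Rightarrow> ('b list \<Rightarrow> 'b set) \<Rightarrow> ('a \<times> 'b) list \<Rightarrow> ('a \<times> 'b) set" where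
  "prod_hop f1 f2 xs = f1 (map fst xs) \<times> f2 (map snd xs)"

definition prod_op :: "('a list \<Rightarrow> 'a) \<Rightarrow> ('b list \<Rightarrow> 'b) \<Rightarrow> ('a \<times> 'b) list \<Rightarrow> 'a \<times> 'b" where
  "prod_op g1 g2 xs = (g1 (map fst xs), g2 (map snd xs))"

definition prod_ext ::
  "('r list \<Rightarrow> 'a \<Rightarrow> 'a set) \<Rightarrow> ('s list \<Rightarrow> 'b \<Rightarrow> 'b set) \<Rightarrow> ('r \<times> 's) list \<Rightarrow> 'a \<times> 'b \<Rightarrow> ('a \<times> 'b) set" where
  "prod_ext g1 g2 rs x = g1 (map fst rs) (fst x) \<times> g2 (map snd rs) (snd x)"

(* (phi1 x phi2)(K1 x K2) = phi1 K1 x phi2 K2 (for nonempty K1, K2) *)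
definition prod_phi :: "('a set \<Rightarrow> 'a set) \<Rightarrow> ('b set \<Rightarrow> 'b set) \<Rightarrow> ('a \<times> 'b) set \<Rightarrow> ('a \<times> 'b) set" where
  "prod_phi phi1 phi2 K = phi1 (fst ` K) \<times> phi2 (snd ` K)"

end

theory Submission
  imports Defs
begin

(* All product structures act componentwise, and the lifted hyperoperation of a list of
   rectangles is again a rectangle.  Since the values g2 rs x are nonempty subsets of M2, an
   inclusion  X \<times> g2 rs x \<subseteq> S \<times> M2  amounts to  X \<subseteq> S; together with
   (phi1 \<times> phi2)(Q1 \<times> M2) = phi1 Q1 \<times> M2 this reduces both the subhypermodule axioms and the
   classical prime condition for Q1 \<times> M2 to those for Q1.  For the converse transfer of the
   hypergroup axioms one pads lists over M1 with a fixed element of M2 and cancels the (nonempty)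
   second factor. *)

lemma list_all2_mem_map2_Times:
  "length As = length Bs \<Longrightarrow> list_all2 (\<in>) ps (map2 (\<lambda>A B. A \<times> B) As Bs) \<longleftrightarrow>
     list_all2 (\<in>) (map fst ps) As \<and> list_all2 (\<in>) (map snd ps) Bs"
  by (auto simp: list_all2_conv_all_nth mem_Times_iff)

lemma liftS_prod_hop:
  assumes "length As = length Bs"
  shows "liftS (prod_hop f1 f2) (map2 (\<lambda>A B. A \<times> B) As Bs) = liftS f1 As \<times> liftS f2 Bs"
proof (intro equalityI subsetI)
  fix p assume "p \<in> liftS (prod_hop f1 f2) (map2 (\<lambda>A B. A \<times> B) As Bs)"
  then show "p \<in> liftS f1 As \<times> liftS f2 Bs"
    using list_all2_mem_map2_Times[OF assms] by (auto simp: liftS_def prod_hop_def)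
next
  fix p assume "p \<in> liftS f1 As \<times> liftS f2 Bs"
  then obtain xs ys where xs: "list_all2 (\<in>) xs As" "fst p \<in> f1 xs"
    and ys: "list_all2 (\<in>) ys Bs" "snd p \<in> f2 ys"
    by (auto simp: liftS_def)
  then have "length xs = length ys"
    using assms by (metis list_all2_lengthD)
  with xs ys have "list_all2 (\<in>) (zip xs ys) (map2 (\<lambda>A B. A \<times> B) As Bs)"
    and "p \<in> prod_hop f1 f2 (zip xs ys)"
    using list_all2_mem_map2_Times[OF assms] by (auto simp: prod_hop_def mem_Times_iff)
  then show "p \<in> liftS (prod_hop f1 f2) (map2 (\<lambda>A B. A \<times> B) As Bs)"
    by (auto simp: liftS_def)
qed

lemma liftS_prod_hop_splice:
  "liftS (prod_hop f1 f2) (map sing (take i ps) @ [A \<times> B] @ map sing (drop k ps)) =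
     liftS f1 (map sing (take i (map fst ps)) @ [A] @ map sing (drop k (map fst ps))) \<times>
     liftS f2 (map sing (take i (map snd ps)) @ [B] @ map sing (drop k (map snd ps)))"
proof -
  have sing_pairs: "map sing qs = map2 (\<lambda>A B. A \<times> B) (map (sing \<circ> fst) qs) (map (sing \<circ> snd) qs)" for qs
    by (induction qs) (auto simp: sing_def)
  have "map sing (take i ps) @ [A \<times> B] @ map sing (drop k ps) =
     map2 (\<lambda>A B. A \<times> B) (map sing (take i (map fst ps)) @ [A] @ map sing (drop k (map fst ps)))
       (map sing (take i (map snd ps)) @ [B] @ map sing (drop k (map snd ps)))"
    by (simp add: take_map drop_map sing_pairs)
  then show ?thesis
    by (simp only:) (rule liftS_prod_hop, simp)
qed

lemma prod_hop_take_drop: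
  "prod_hop f1 f2 (take m (drop i ps)) = f1 (take m (drop i (map fst ps))) \<times> f2 (take m (drop i (map snd ps)))"
  by (simp add: prod_hop_def take_map drop_map)

lemma zip_replicate_in_lists_Times: "xs \<in> lists A \<Longrightarrow> b \<in> B \<Longrightarrow> zip xs (replicate k b) \<in> lists (A \<times> B)"
  by (auto dest: set_zip_leftD set_zip_rightD)

lemma mary_hypergroup_arity: "mary_hypergroup H f m \<Longrightarrow> 2 \<le> m"
  unfolding mary_hypergroup_def by blast

lemma mary_hypergroup_closed:
  "mary_hypergroup H f m \<Longrightarrow> xs \<in> lists H \<Longrightarrow> length xs = m \<Longrightarrow> f xs \<noteq> {} \<and> f xs \<subseteq> H"
  unfolding mary_hypergroup_def by blast

lemma mary_hypergroup_assoc: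
  "mary_hypergroup H f m \<Longrightarrow> xs \<in> lists H \<Longrightarrow> length xs = 2*m - 1 \<Longrightarrow> i < m \<Longrightarrow> j < m \<Longrightarrow>
     liftS f (map sing (take i xs) @ [f (take m (drop i xs))] @ map sing (drop (i+m) xs)) =
     liftS f (map sing (take j xs) @ [f (take m (drop j xs))] @ map sing (drop (j+m) xs))"
  unfolding mary_hypergroup_def by blast

lemma mary_hypergroup_reproduction:
  "mary_hypergroup H f m \<Longrightarrow> xs \<in> lists H \<Longrightarrow> length xs = m \<Longrightarrow> i < m \<Longrightarrow>
     liftS f (map sing (take i xs) @ [H] @ map sing (drop (Suc i) xs)) = H"
  unfolding mary_hypergroup_def by blast

lemma liftS_assoc_splice_nonempty:
  assumes H: "mary_hypergroup H f m" and xs: "xs \<in> lists H" "length xs = 2*m - 1" and "i < m"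
  shows "liftS f (map sing (take i xs) @ [f (take m (drop i xs))] @ map sing (drop (i+m) xs)) \<noteq> {}"
proof -
  have "take m (drop i xs) \<in> lists H" "length (take m (drop i xs)) = m"
    using xs \<open>i < m\<close> by (auto dest: in_set_takeD in_set_dropD)
  then obtain y where y: "y \<in> f (take m (drop i xs))" "y \<in> H"
    using mary_hypergroup_closed[OF H] by blast
  define ys where "ys = take i xs @ [y] @ drop (i+m) xs"
  have "ys \<in> lists H" "length ys = m"
    using xs y \<open>i < m\<close> by (auto simp: ys_def dest: in_set_takeD in_set_dropD)
  then have "f ys \<noteq> {}"
    using mary_hypergroup_closed[OF H] by blast
  moreover have "list_all2 (\<in>) ys (map sing (take i xs) @ [f (take m (drop i xs))] @ map sing (drop (i+m) xs))"
    using y by (auto simp: ys_def sing_def list_all2_append list_all2_map2 list_all2_refl)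
  ultimately show ?thesis
    unfolding liftS_def by blast
qed

lemma mary_hypergroup_Times:
  assumes A: "mary_hypergroup A f1 m" and B: "mary_hypergroup B f2 m"
  shows "mary_hypergroup (A \<times> B) (prod_hop f1 f2) m"
  unfolding mary_hypergroup_def
proof (intro conjI ballI allI impI)
  show "2 \<le> m"
    using mary_hypergroup_arity[OF A] .
next
  fix ps assume "ps \<in> lists (A \<times> B)" "length ps = m"
  then have "map fst ps \<in> lists A" "map snd ps \<in> lists B" "length (map fst ps) = m" "length (map snd ps) = m"
    by (auto simp: mem_Times_iff)
  then show "prod_hop f1 f2 ps \<noteq> {}" "prod_hop f1 f2 ps \<subseteq> A \<times> B"
    using mary_hypergroup_closed[OF A] mary_hypergroup_closed[OF B] unfolding prod_hop_def by blast+
next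
  fix ps i j assume "ps \<in> lists (A \<times> B)" "length ps = 2*m - 1" "i < m" "j < m"
  then have "map fst ps \<in> lists A" "map snd ps \<in> lists B" "length (map fst ps) = 2*m - 1" "length (map snd ps) = 2*m - 1"
    by (auto simp: mem_Times_iff)
  then show "liftS (prod_hop f1 f2) (map sing (take i ps) @ [prod_hop f1 f2 (take m (drop i ps))] @ map sing (drop (i + m) ps)) =
        liftS (prod_hop f1 f2) (map sing (take j ps) @ [prod_hop f1 f2 (take m (drop j ps))] @ map sing (drop (j + m) ps))"
    unfolding prod_hop_take_drop liftS_prod_hop_splice
    using mary_hypergroup_assoc[OF A, of "map fst ps" i j] mary_hypergroup_assoc[OF B, of "map snd ps" i j]
      \<open>i < m\<close> \<open>j < m\<close> by simp
next
  fix ps i assume "ps \<in> lists (A \<times> B)" "length ps = m" "i < m"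
  then have "map fst ps \<in> lists A" "map snd ps \<in> lists B" "length (map fst ps) = m" "length (map snd ps) = m"
    by (auto simp: mem_Times_iff)
  then show "liftS (prod_hop f1 f2) (map sing (take i ps) @ [A \<times> B] @ map sing (drop (Suc i) ps)) = A \<times> B"
    unfolding liftS_prod_hop_splice
    using mary_hypergroup_reproduction[OF A, of "map fst ps" i] mary_hypergroup_reproduction[OF B, of "map snd ps" i]
      \<open>i < m\<close> by simp
qed

lemma mary_hypergroup_Times_imp_fst:
  fixes A :: "'a set" and B :: "'b set"
  assumes P: "mary_hypergroup (A \<times> B) (prod_hop f1 f2) m" and "B \<noteq> {}"
  shows "mary_hypergroup A f1 m"
proof -
  obtain b where b: "b \<in> B"
    using \<open>B \<noteq> {}\<close> by blast
  define pad :: "'a list \<Rightarrow> ('a \<times> 'b) list" where "pad xs = zip xs (replicate (length xs) b)" for xs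
  have pad: "pad xs \<in> lists (A \<times> B)" "map fst (pad xs) = xs" "length (pad xs) = length xs"
    if "xs \<in> lists A" for xs
    using that b by (simp_all add: pad_def zip_replicate_in_lists_Times)
  show ?thesis
    unfolding mary_hypergroup_def
  proof (intro conjI ballI allI impI)
    show "2 \<le> m"
      using mary_hypergroup_arity[OF P] .
  next
    fix xs assume "xs \<in> lists A" "length xs = m"
    then have "prod_hop f1 f2 (pad xs) \<noteq> {}" "prod_hop f1 f2 (pad xs) \<subseteq> A \<times> B"
      using mary_hypergroup_closed[OF P, of "pad xs"] pad[of xs] by simp_all
    then show "f1 xs \<noteq> {}" "f1 xs \<subseteq> A"
      using pad[OF \<open>xs \<in> lists A\<close>] by (auto simp: prod_hop_def)
  next
    fix xs i j assume xs: "xs \<in> lists A" "length xs = 2*m - 1" and "i < m" "j < m"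
    let ?splice = "\<lambda>k. map sing (take k (pad xs)) @ [prod_hop f1 f2 (take m (drop k (pad xs)))] @
      map sing (drop (k + m) (pad xs))"
    have "liftS (prod_hop f1 f2) (?splice i) = liftS (prod_hop f1 f2) (?splice j)"
      "liftS (prod_hop f1 f2) (?splice i) \<noteq> {}"
      using mary_hypergroup_assoc[OF P, of "pad xs" i j] liftS_assoc_splice_nonempty[OF P, of "pad xs" i]
        pad[OF xs(1)] xs \<open>i < m\<close> \<open>j < m\<close>
      by simp_all
    then show "liftS f1 (map sing (take i xs) @ [f1 (take m (drop i xs))] @ map sing (drop (i+m) xs)) =
      liftS f1 (map sing (take j xs) @ [f1 (take m (drop j xs))] @ map sing (drop (j+m) xs))"
      unfolding prod_hop_take_drop liftS_prod_hop_splice pad(2)[OF xs(1)] times_eq_iff by auto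
  next
    fix xs i assume xs: "xs \<in> lists A" "length xs = m" and "i < m"
    then have "A \<times> B \<noteq> {}"
      using b by (cases xs) auto
    moreover have "liftS (prod_hop f1 f2) (map sing (take i (pad xs)) @ [A \<times> B] @ map sing (drop (Suc i) (pad xs))) = A \<times> B"
      using mary_hypergroup_reproduction[OF P, of "pad xs" i] pad[OF xs(1)] xs \<open>i < m\<close> by simp
    ultimately show "liftS f1 (map sing (take i xs) @ [A] @ map sing (drop (Suc i) xs)) = A"
      unfolding liftS_prod_hop_splice pad(2)[OF xs(1)] times_eq_iff by auto
  qed
qed

lemma krasner_hyperring_one_mem: "krasner_hyperring R f' g' z one m n \<Longrightarrow> one \<in> R"
  unfolding krasner_hyperring_def by (elim conjE)

lemma hypermodule_mary_hypergroup: "hypermodule R f' g' z one m n M f g zM \<Longrightarrow> mary_hypergroup M f m"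
  unfolding hypermodule_def canonical_hypergroup_def by (elim conjE)

lemma hypermodule_zero_mem: "hypermodule R f' g' z one m n M f g zM \<Longrightarrow> zM \<in> M"
  unfolding hypermodule_def canonical_hypergroup_def by (elim conjE)

lemma hypermodule_ext_closed:
  assumes "hypermodule R f' g' z one m n M f g zM" "rs \<in> lists R" "x \<in> M" "length rs = n - 1"
  shows "g rs x \<noteq> {} \<and> g rs x \<subseteq> M"
proof -
  have "\<forall>rs \<in> lists R. \<forall>x\<in>M. length rs = n - 1 \<longrightarrow> g rs x \<noteq> {} \<and> g rs x \<subseteq> M"
    using assms(1) unfolding hypermodule_def by (elim conjE)
  then show ?thesis
    using assms(2-4) by blast
qed

lemma prod_ext_subset_Times_iff:
  assumes "hypermodule R2 f2' g2' z2 one2 m n M2 f2 g2 zM2"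
    and "map snd rs \<in> lists R2" "length rs = n - 1" "snd p \<in> M2"
  shows "prod_ext g1 g2 rs p \<subseteq> S \<times> M2 \<longleftrightarrow> g1 (map fst rs) (fst p) \<subseteq> S"
  using hypermodule_ext_closed[OF assms(1), of "map snd rs" "snd p"] assms(2-4)
  by (auto simp: prod_ext_def)

lemma Times_subhypermodules_iff:
  assumes M2: "hypermodule R2 f2' g2' z2 one2 m n M2 f2 g2 zM2" and "one2 \<in> R2"
  shows "Q1 \<times> M2 \<in> subhypermodules (R1 \<times> R2) m n (M1 \<times> M2) (prod_hop f1 f2) (prod_ext g1 g2)
     \<longleftrightarrow> Q1 \<in> subhypermodules R1 m n M1 f1 g1"
proof -
  have "M2 \<noteq> {}"
    using hypermodule_zero_mem[OF M2] by blast
  have "mary_hypergroup (Q1 \<times> M2) (prod_hop f1 f2) m \<longleftrightarrow> mary_hypergroup Q1 f1 m"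
    using mary_hypergroup_Times_imp_fst[OF _ \<open>M2 \<noteq> {}\<close>]
      mary_hypergroup_Times[OF _ hypermodule_mary_hypergroup[OF M2]] by (rule iffI)
  moreover have "(\<forall>ps \<in> lists (R1 \<times> R2). \<forall>p \<in> Q1 \<times> M2. length ps = n - 1 \<longrightarrow> prod_ext g1 g2 ps p \<subseteq> Q1 \<times> M2)
    \<longleftrightarrow> (\<forall>rs \<in> lists R1. \<forall>x \<in> Q1. length rs = n - 1 \<longrightarrow> g1 rs x \<subseteq> Q1)" (is "?closed_prod \<longleftrightarrow> ?closed_fst")
  proof
    assume closed: ?closed_prod
    show ?closed_fst
    proof (intro ballI impI)
      fix rs x assume "rs \<in> lists R1" "x \<in> Q1" "length rs = n - 1"
      moreover define ps where "ps = zip rs (replicate (n - 1) one2)"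
      ultimately have "ps \<in> lists (R1 \<times> R2)" "map fst ps = rs" "map snd ps \<in> lists R2" "length ps = n - 1"
        using \<open>one2 \<in> R2\<close> by (auto simp: zip_replicate_in_lists_Times)
      moreover have "prod_ext g1 g2 ps (x, zM2) \<subseteq> Q1 \<times> M2"
        using closed \<open>ps \<in> lists (R1 \<times> R2)\<close> \<open>length ps = n - 1\<close> \<open>x \<in> Q1\<close> hypermodule_zero_mem[OF M2]
        by blast
      ultimately show "g1 rs x \<subseteq> Q1"
        using prod_ext_subset_Times_iff[OF M2, of ps "(x, zM2)"] hypermodule_zero_mem[OF M2] by simp
    qed
  next
    assume closed: ?closed_fst
    show ?closed_prod
    proof (intro ballI impI)
      fix ps p assume "ps \<in> lists (R1 \<times> R2)" "p \<in> Q1 \<times> M2" "length ps = n - 1"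
      moreover from this have "map fst ps \<in> lists R1" "map snd ps \<in> lists R2" "fst p \<in> Q1" "snd p \<in> M2"
        by (auto simp: mem_Times_iff)
      moreover from this have "g1 (map fst ps) (fst p) \<subseteq> Q1"
        using closed \<open>length ps = n - 1\<close> by simp
      ultimately show "prod_ext g1 g2 ps p \<subseteq> Q1 \<times> M2"
        using prod_ext_subset_Times_iff[OF M2, of ps p] by blast
    qed
  qed
  moreover have "Q1 \<times> M2 \<noteq> {} \<longleftrightarrow> Q1 \<noteq> {}" "Q1 \<times> M2 \<subseteq> M1 \<times> M2 \<longleftrightarrow> Q1 \<subseteq> M1"
    using \<open>M2 \<noteq> {}\<close> by auto
  ultimately show ?thesis
    unfolding subhypermodules_def mem_Collect_eq by argo
qed

definition classical_prime_cond ::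
  "'r set \<Rightarrow> 'r \<Rightarrow> nat \<Rightarrow> 'a set \<Rightarrow> ('r list \<Rightarrow> 'a \<Rightarrow> 'a set) \<Rightarrow> 'a set \<Rightarrow> 'a set \<Rightarrow> bool" where
  "classical_prime_cond R one n M g P Q \<longleftrightarrow>
    (\<forall>rs \<in> lists R. \<forall>a \<in> M. length rs = n - 1 \<longrightarrow> g rs a \<subseteq> P \<longrightarrow>
      (\<exists>i<n-1. g (rs ! i # replicate (n-2) one) a \<subseteq> Q))"

lemma classical_prime_iff_cond:
  "classical_prime R one m n M f g phi Q \<longleftrightarrow>
     Q \<in> subhypermodules R m n M f g \<and> Q \<noteq> M \<and> classical_prime_cond R one n M g (Q - phi Q) Q"
  by (simp add: classical_prime_def classical_prime_cond_def)

lemma classical_prime_cond_Times_iff: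
  assumes M2: "hypermodule R2 f2' g2' z2 one2 m n M2 f2 g2 zM2" and "one2 \<in> R2"
  shows "classical_prime_cond (R1 \<times> R2) (one1, one2) n (M1 \<times> M2) (prod_ext g1 g2) (P \<times> M2) (Q \<times> M2)
     \<longleftrightarrow> classical_prime_cond R1 one1 n M1 g1 P Q" (is "?prod \<longleftrightarrow> ?fst")
proof -
  have unit_padded: "map snd (r # replicate (n-2) (one1, one2)) \<in> lists R2"
    "length (r # replicate (n-2) (one1, one2)) = n - 1"
    if "snd r \<in> R2" "i < n - 1" for r i
    using that \<open>one2 \<in> R2\<close> by auto
  show ?thesis
  proof
    assume cond_prod: ?prod
    show ?fst
      unfolding classical_prime_cond_def
    proof (intro ballI impI)
      fix rs a assume rs: "rs \<in> lists R1" "a \<in> M1" "length rs = n - 1" "g1 rs a \<subseteq> P"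
      define ps where "ps = zip rs (replicate (n - 1) one2)"
      have ps: "ps \<in> lists (R1 \<times> R2)" "map fst ps = rs" "map snd ps \<in> lists R2" "length ps = n - 1"
        using rs \<open>one2 \<in> R2\<close> by (auto simp: ps_def zip_replicate_in_lists_Times)
      have zM2: "zM2 \<in> M2"
        using hypermodule_zero_mem[OF M2] .
      have "prod_ext g1 g2 ps (a, zM2) \<subseteq> P \<times> M2"
        using prod_ext_subset_Times_iff[OF M2 ps(3,4), of "(a, zM2)"] ps(2) rs(4) zM2 by simp
      then obtain i where i: "i < n - 1"
        and "prod_ext g1 g2 (ps ! i # replicate (n-2) (one1, one2)) (a, zM2) \<subseteq> Q \<times> M2"
        using cond_prod ps(1,4) rs(2) zM2 unfolding classical_prime_cond_def by blast
      moreover have "ps ! i = (rs ! i, one2)"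
        using i rs(3) by (simp add: ps_def)
      ultimately have "g1 (rs ! i # replicate (n-2) one1) a \<subseteq> Q"
        using prod_ext_subset_Times_iff[OF M2 unit_padded[of "ps ! i" i], of "(a, zM2)"] \<open>one2 \<in> R2\<close> zM2
        by simp
      with i show "\<exists>i<n-1. g1 (rs ! i # replicate (n-2) one1) a \<subseteq> Q"
        by blast
    qed
  next
    assume cond_fst: ?fst
    show ?prod
      unfolding classical_prime_cond_def
    proof (intro ballI impI)
      fix ps p assume ps: "ps \<in> lists (R1 \<times> R2)" "p \<in> M1 \<times> M2" "length ps = n - 1"
        "prod_ext g1 g2 ps p \<subseteq> P \<times> M2"
      then have "map fst ps \<in> lists R1" "map snd ps \<in> lists R2" "fst p \<in> M1" "snd p \<in> M2"
        by (auto simp: mem_Times_iff)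
      then have "g1 (map fst ps) (fst p) \<subseteq> P"
        using prod_ext_subset_Times_iff[OF M2] ps(3,4) by blast
      moreover have "length (map fst ps) = n - 1"
        using ps(3) by simp
      ultimately obtain i where i: "i < n - 1" and "g1 (map fst ps ! i # replicate (n-2) one1) (fst p) \<subseteq> Q"
        using cond_fst \<open>map fst ps \<in> lists R1\<close> \<open>fst p \<in> M1\<close> unfolding classical_prime_cond_def by blast
      moreover have "snd (ps ! i) \<in> R2"
        using ps(1,3) i by (auto simp: mem_Times_iff)
      ultimately have "prod_ext g1 g2 (ps ! i # replicate (n-2) (one1, one2)) p \<subseteq> Q \<times> M2"
        using prod_ext_subset_Times_iff[OF M2 unit_padded[of "ps ! i" i] \<open>snd p \<in> M2\<close>] ps(3) by simp
      with i show "\<exists>i<n-1. prod_ext g1 g2 (ps ! i # replicate (n-2) (one1, one2)) p \<subseteq> Q \<times> M2"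
        by blast
    qed
  qed
qed

lemma classical_prime_Times_iff:
  assumes M2: "hypermodule R2 f2' g2' z2 one2 m n M2 f2 g2 zM2" and "one2 \<in> R2" and "phi2 M2 = M2"
  shows "classical_prime (R1 \<times> R2) (one1, one2) m n (M1 \<times> M2) (prod_hop f1 f2) (prod_ext g1 g2)
      (prod_phi phi1 phi2) (Q1 \<times> M2)
    \<longleftrightarrow> classical_prime R1 one1 m n M1 f1 g1 phi1 Q1"
proof (cases "Q1 = {}")
  case True
  then show ?thesis
    by (simp add: classical_prime_def subhypermodules_def)
next
  case False
  have "M2 \<noteq> {}"
    using hypermodule_zero_mem[OF M2] by blast
  then have "Q1 \<times> M2 - prod_phi phi1 phi2 (Q1 \<times> M2) = (Q1 - phi1 Q1) \<times> M2"
    "Q1 \<times> M2 \<noteq> M1 \<times> M2 \<longleftrightarrow> Q1 \<noteq> M1"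
    using False \<open>phi2 M2 = M2\<close> by (auto simp: prod_phi_def times_eq_iff)
  then show ?thesis
    by (simp add: classical_prime_iff_cond Times_subhypermodules_iff[OF M2 \<open>one2 \<in> R2\<close>]
        classical_prime_cond_Times_iff[OF M2 \<open>one2 \<in> R2\<close>])
qed

theorem mainTheorem18:
  fixes R1 :: "'r set" and R2 :: "'s set" and M1 :: "'a set" and M2 :: "'b set"
    and f1' :: "'r list \<Rightarrow> 'r set" and g1' :: "'r list \<Rightarrow> 'r"
    and f2' :: "'s list \<Rightarrow> 's set" and g2' :: "'s list \<Rightarrow> 's"
    and f1 :: "'a list \<Rightarrow> 'a set" and g1 :: "'r list \<Rightarrow> 'a \<Rightarrow> 'a set"
    and f2 :: "'b list \<Rightarrow> 'b set" and g2 :: "'s list \<Rightarrow> 'b \<Rightarrow> 'b set"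
    and z1 one1 :: 'r and z2 one2 :: 's and zM1 :: 'a and zM2 :: 'b
    and m n :: nat
    and phi1 :: "'a set \<Rightarrow> 'a set" and phi2 :: "'b set \<Rightarrow> 'b set"
    and Q1 :: "'a set"
  assumes "krasner_hyperring R1 f1' g1' z1 one1 m n"
    and "krasner_hyperring R2 f2' g2' z2 one2 m n"
    and "hypermodule R1 f1' g1' z1 one1 m n M1 f1 g1 zM1"
    and "hypermodule R2 f2' g2' z2 one2 m n M2 f2 g2 zM2"
    and "\<forall>K \<in> subhypermodules R1 m n M1 f1 g1. phi1 K \<in> subhypermodules R1 m n M1 f1 g1 \<union> {{}}"
    and "\<forall>K \<in> subhypermodules R2 m n M2 f2 g2. phi2 K \<in> subhypermodules R2 m n M2 f2 g2 \<union> {{}}"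
    and "phi2 M2 = M2"
  shows "classical_prime (R1 \<times> R2) (one1, one2) m n (M1 \<times> M2) (prod_hop f1 f2) (prod_ext g1 g2)
           (prod_phi phi1 phi2) (Q1 \<times> M2)
         \<longleftrightarrow> classical_prime R1 one1 m n M1 f1 g1 phi1 Q1"
  by (rule classical_prime_Times_iff[OF assms(4) krasner_hyperring_one_mem[OF assms(2)]]) (rule assms(7))

end
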